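(* For $x\in(0,1)$ and $z\in(0,\infty)$, the functions $f_1(k)=\sin(x^k)^{1/k}$, $f_2(k)=\cos(x^k)^{1/k}$ and $f_4(k)=\tanh(z^k)^{1/k}$ are increasing on $(0,\infty)$. *)

theory Defs
  imports "HOL-Analysis.Analysis"
begin

end

theory Submission imports Defs begin

text \<open>
Write \<open>g (t powr k) powr (1/k) = exp (L k)\<close> with \<open>L k = ln (g (t powr k)) / k\<close>. Since
\<open>k * ln t = ln u\<close> for \<open>u = t powr k\<close>, the numerator of \<open>L' k\<close> is
\<open>u * g' u / g u * ln u - ln (g u)\<close>, which involves \<open>u\<close> only; so monotonicity in \<open>k\<close> reduces to
a pointwise inequality between \<open>ln (g u)\<close> and the elasticity \<open>u * g' u / g u\<close> times \<open>ln u\<close>.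
For \<open>sin\<close> and \<open>tanh\<close> the elasticity lies in \<open>[0, 1]\<close> and \<open>g u \<le> min u 1\<close>; for \<open>cos\<close> on
\<open>(0, 1)\<close> both sides have opposite signs.
\<close>

lemma mono_on_root_comp_powr:
  fixes g g' :: "real \<Rightarrow> real" and t :: real and S :: "real set"
  assumes "0 < t"
    and powr_in: "\<And>k. 0 < k \<Longrightarrow> t powr k \<in> S"
    and pos: "\<And>u. u \<in> S \<Longrightarrow> 0 < g u"
    and deriv: "\<And>u. u \<in> S \<Longrightarrow> (g has_real_derivative g' u) (at u)"
    and elasticity: "\<And>u. u \<in> S \<Longrightarrow> ln (g u) \<le> u * g' u / g u * ln u"
  shows "mono_on {0<..} (\<lambda>k. g (t powr k) powr (1 / k))"
proof (rule mono_onI)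
  define L where "L = (\<lambda>k. ln (g (t powr k)) / k)"
  define L' where "L' k = (let u = t powr k in (u * g' u / g u * ln u - ln (g u)) / k\<^sup>2)" for k
  have L_deriv: "(L has_real_derivative L' k) (at k)" if "0 < k" for k
  proof -
    let ?u = "t powr k"
    have "((\<lambda>k. t powr k) has_real_derivative ?u * ln t) (at k)"
      using \<open>0 < t\<close> by (auto intro!: derivative_eq_intros)
    from DERIV_chain2[OF deriv[OF powr_in[OF that]] this]
    have "((\<lambda>k. g (t powr k)) has_real_derivative g' ?u * (?u * ln t)) (at k)" .
    from DERIV_chain2[OF DERIV_ln_divide[OF pos[OF powr_in[OF that]]] this]
    have "((\<lambda>k. ln (g (t powr k))) has_real_derivative g' ?u * (?u * ln t) / g ?u) (at k)"
      by simp
    from DERIV_divide[OF this DERIV_ident] show ?thesis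
      using that by (simp add: L_def L'_def Let_def power2_eq_square field_simps)
  qed
  have L'_nonneg: "0 \<le> L' k" if "0 < k" for k
    using elasticity[OF powr_in[OF that]] by (simp add: L'_def Let_def)
  fix a b :: real
  assume ab: "a \<in> {0<..}" "b \<in> {0<..}" "a \<le> b"
  then have "L a \<le> L b"
    by (intro deriv_nonneg_imp_mono[of a b L L']) (auto intro: L_deriv L'_nonneg)
  moreover have "g (t powr k) powr (1 / k) = exp (L k)" if "0 < k" for k
    using pos[OF powr_in[OF that]] by (simp add: powr_def L_def)
  ultimately show "g (t powr a) powr (1 / a) \<le> g (t powr b) powr (1 / b)"
    using ab by simp
qed

lemma ln_le_mult_ln:
  fixes y u c :: real
  assumes "0 < y" "y \<le> 1" "y \<le> u" "0 \<le> c" "c \<le> 1"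
  shows "ln y \<le> c * ln u"
proof (cases "u \<le> 1")
  case True
  have "ln y \<le> ln u" using assms by simp
  also have "\<dots> \<le> c * ln u" using True assms by (simp add: mult_le_cancel_right1)
  finally show ?thesis .
next
  case False
  then have "ln y \<le> 0" "0 \<le> c * ln u" using assms by simp_all
  then show ?thesis by linarith
qed

lemma mult_cos_le_sin:
  fixes u :: real
  assumes "0 \<le> u" "u \<le> pi"
  shows "u * cos u \<le> sin u"
proof -
  have "(\<lambda>u. sin u - u * cos u) 0 \<le> (\<lambda>u. sin u - u * cos u) u"
  proof (rule deriv_nonneg_imp_mono[where g = "\<lambda>u. sin u - u * cos u" and g' = "\<lambda>u. u * sin u"])
    fix w assume "w \<in> {0..u}"
    show "((\<lambda>u. sin u - u * cos u) has_real_derivative w * sin w) (at w)"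
      by (auto intro!: derivative_eq_intros)
    show "0 \<le> w * sin w"
      using \<open>w \<in> {0..u}\<close> assms by (simp add: sin_ge_zero)
  qed (use assms in simp)
  then show ?thesis by simp
qed

lemma tanh_le_self:
  fixes u :: real
  assumes "0 \<le> u"
  shows "tanh u \<le> u"
proof -
  have "(\<lambda>u. u - tanh u) 0 \<le> (\<lambda>u. u - tanh u) u"
    by (rule deriv_nonneg_imp_mono[where g = "\<lambda>u. u - tanh u" and g' = "\<lambda>u. (tanh u)\<^sup>2"])
      (use assms in \<open>auto intro!: derivative_eq_intros\<close>)
  then show ?thesis by simp
qed

lemma mult_one_minus_tanh_sq_le_tanh:
  fixes u :: real
  assumes "0 \<le> u"
  shows "u * (1 - (tanh u)\<^sup>2) \<le> tanh u"
proof -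
  have tanh_sq_le_1: "(tanh w)\<^sup>2 \<le> 1" if "0 \<le> w" for w :: real
    using that tanh_real_lt_1[of w] by (simp add: power_le_one)
  have "(\<lambda>u. tanh u - u * (1 - (tanh u)\<^sup>2)) 0 \<le> (\<lambda>u. tanh u - u * (1 - (tanh u)\<^sup>2)) u"
  proof (rule deriv_nonneg_imp_mono[where g = "\<lambda>u. tanh u - u * (1 - (tanh u)\<^sup>2)"
                                     and g' = "\<lambda>u. 2 * u * tanh u * (1 - (tanh u)\<^sup>2)"])
    fix w assume "w \<in> {0..u}"
    show "((\<lambda>u. tanh u - u * (1 - (tanh u)\<^sup>2)) has_real_derivative
                  2 * w * tanh w * (1 - (tanh w)\<^sup>2)) (at w)"
      by (auto intro!: derivative_eq_intros simp: algebra_simps power2_eq_square)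
    show "0 \<le> 2 * w * tanh w * (1 - (tanh w)\<^sup>2)"
      using \<open>w \<in> {0..u}\<close> tanh_sq_le_1[of w] by simp
  qed (use assms in simp)
  then show ?thesis by simp
qed

lemma ln_sin_le_elasticity:
  fixes u :: real
  assumes "0 < u" "u < pi / 2"
  shows "ln (sin u) \<le> u * cos u / sin u * ln u"
proof -
  have "0 < sin u" "0 < cos u"
    using assms by (auto intro: sin_gt_zero cos_gt_zero)
  moreover have "u * cos u \<le> sin u"
    using assms by (intro mult_cos_le_sin) auto
  ultimately show ?thesis
    using assms sin_x_le_x[of u] by (intro ln_le_mult_ln) auto
qed

lemma ln_cos_le_elasticity:
  fixes u :: real
  assumes "0 < u" "u \<le> 1"
  shows "ln (cos u) \<le> u * - sin u / cos u * ln u"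
proof -
  have "u < pi / 2" using assms pi_gt3 by linarith
  then have "0 < sin u" "0 < cos u"
    using assms by (auto intro: sin_gt_zero cos_gt_zero)
  then have "0 \<le> u * sin u * (- ln u) / cos u"
    using assms by (intro divide_nonneg_pos mult_nonneg_nonneg) auto
  moreover have "ln (cos u) \<le> 0" using \<open>0 < cos u\<close> by simp
  ultimately show ?thesis by simp
qed

lemma ln_tanh_le_elasticity:
  fixes u :: real
  assumes "0 < u"
  shows "ln (tanh u) \<le> u * (1 - (tanh u)\<^sup>2) / tanh u * ln u"
proof (rule ln_le_mult_ln)
  have "(tanh u)\<^sup>2 \<le> 1" using tanh_real_lt_1[of u] assms by (simp add: power_le_one)
  then show "0 \<le> u * (1 - (tanh u)\<^sup>2) / tanh u" using assms by simp
  show "u * (1 - (tanh u)\<^sup>2) / tanh u \<le> 1"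
    using assms mult_one_minus_tanh_sq_le_tanh[of u] by simp
qed (use assms tanh_real_lt_1[of u] tanh_le_self[of u] in simp_all)

theorem lemma4p1:
  fixes x z :: real
  assumes "0 < x" and "x < 1" and "0 < z"
  shows "mono_on {0<..} (\<lambda>k::real. sin (x powr k) powr (1 / k)) \<and>
         mono_on {0<..} (\<lambda>k::real. cos (x powr k) powr (1 / k)) \<and>
         mono_on {0<..} (\<lambda>k::real. tanh (z powr k) powr (1 / k))"
proof (intro conjI)
  have x_powr_in: "x powr k \<in> {0<..<1}" if "0 < k" for k
    using assms that powr_less_mono2[of k x 1] by simp
  have below_pi_half: "0 < u \<and> u < pi / 2" if "u \<in> {0<..<1}" for u
    using that pi_gt3 by simp
  show "mono_on {0<..} (\<lambda>k. sin (x powr k) powr (1 / k))"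
  proof (rule mono_on_root_comp_powr[where S = "{0<..<1}" and g' = cos])
    fix u :: real assume "u \<in> {0<..<1}"
    with below_pi_half show "0 < sin u" "ln (sin u) \<le> u * cos u / sin u * ln u"
      by (blast intro: sin_gt_zero2 ln_sin_le_elasticity)+
  qed (use assms x_powr_in in \<open>auto intro: DERIV_sin\<close>)
  show "mono_on {0<..} (\<lambda>k. cos (x powr k) powr (1 / k))"
  proof (rule mono_on_root_comp_powr[where S = "{0<..<1}" and g' = "\<lambda>u. - sin u"])
    fix u :: real assume "u \<in> {0<..<1}"
    with below_pi_half show "0 < cos u"
      by (blast intro: cos_gt_zero)
    from \<open>u \<in> {0<..<1}\<close> show "ln (cos u) \<le> u * - sin u / cos u * ln u"
      by (intro ln_cos_le_elasticity) auto
  qed (use assms x_powr_in in \<open>auto intro: DERIV_cos\<close>)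
  show "mono_on {0<..} (\<lambda>k. tanh (z powr k) powr (1 / k))"
  proof (rule mono_on_root_comp_powr[where S = "{0<..}" and g' = "\<lambda>u. 1 - (tanh u)\<^sup>2"])
    fix u :: real assume "u \<in> {0<..}"
    then show "ln (tanh u) \<le> u * (1 - (tanh u)\<^sup>2) / tanh u * ln u"
      by (blast intro: ln_tanh_le_elasticity)
  qed (use assms in \<open>auto intro!: derivative_eq_intros\<close>)
qed

end
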